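(* Let $q_0$ and $q_1$ be quadratic linking functions on a finite abelian group $G$. Then $q_0$ is isometric to $q_1$ if and only if $(b(q_0),\beta(q_0))\cong(b(q_1),\beta(q_1))$ and $K(q_0)=K(q_1)$.
   Context: A linking form on a finite abelian group $G$ is a symmetric bilinear map $b:G\times G\to\mathbb{Q}/\mathbb{Z}$ that is nonsingular ($b(x,y)=0$ for all $x$ implies $y=0$). A quadratic linking function on $G$ is a map $q:G\to\mathbb{Q}/\mathbb{Z}$ such that $b(q)(x,y):=q(x+y)-q(x)-q(y)$ is a linking form; $q$ is a quadratic linking form if moreover $q(-x)=q(x)$. For $a\in G$, $q_a(x):=q(x)+b(q)(x,a)$. Every quadratic linking function can be written $q=q^o_a$ with $q^o$ a quadratic linking form refining $b(q)$ and $a\in G$; $\beta(q):=2a$ is independent of this choice. An isomorphism $(b_0,\beta_0)\cong(b_1,\beta_1)$ is a group automorphism $\theta$ of $G$ with $b_1(\theta x,\theta y)=b_0(x,y)$ and $\theta(\beta_0)=\beta_1$. $q_0$ and $q_1$ are isometric if $q_1\circ\theta=q_0$ for some automorphism $\theta$. The Kervaire–Arf invariant is $K(q)=\arg(GS(q))/2\pi\in\mathbb{Q}/\mathbb{Z}$, where $GS(q)=\sum_{x\in G}\exp(2\pi i\,q(x))$ (this sum is nonzero). *)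

theory Defs
  imports Complex_Main
begin

definition qz_rel :: "rat \<Rightarrow> rat \<Rightarrow> bool" where
  "qz_rel x y \<longleftrightarrow> x - y \<in> \<int>"

quotient_type qz = rat / qz_rel
  morphisms rep_qz abs_qz
proof (rule equivpI)
  show "reflp qz_rel" by (rule reflpI) (simp add: qz_rel_def)
  show "symp qz_rel"
    by (rule sympI) (metis Ints_minus minus_diff_eq qz_rel_def)
  show "transp qz_rel"
  proof (rule transpI)
    fix x y z assume "qz_rel x y" "qz_rel y z"
    then have "(x - y) + (y - z) \<in> \<int>" unfolding qz_rel_def by (rule Ints_add)
    then show "qz_rel x z" by (simp add: qz_rel_def)
  qed
qed

instantiation qz :: ab_group_add
begin

lift_definition zero_qz :: qz is "0::rat" .

lift_definition plus_qz :: "qz \<Rightarrow> qz \<Rightarrow> qz" is "(+)"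
proof -
  fix a b c d :: rat assume "qz_rel a b" "qz_rel c d"
  then have "(a - b) + (c - d) \<in> \<int>" unfolding qz_rel_def by (rule Ints_add)
  then show "qz_rel (a + c) (b + d)" by (simp add: qz_rel_def algebra_simps)
qed

lift_definition uminus_qz :: "qz \<Rightarrow> qz" is "uminus"
  by (metis Ints_minus minus_diff_eq minus_diff_minus qz_rel_def)

lift_definition minus_qz :: "qz \<Rightarrow> qz \<Rightarrow> qz" is "(-)"
proof -
  fix a b c d :: rat assume "qz_rel a b" "qz_rel c d"
  then have "(a - b) - (c - d) \<in> \<int>" unfolding qz_rel_def by (rule Ints_diff)
  then show "qz_rel (a - c) (b - d)" by (simp add: qz_rel_def algebra_simps)
qed

instance
  by standard (transfer; simp add: qz_rel_def algebra_simps)+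

end

lift_definition qz_exp :: "qz \<Rightarrow> complex" is "\<lambda>r. cis (2 * pi * of_rat r)"
proof -
  fix a b :: rat assume "qz_rel a b"
  then obtain k :: int where k: "a - b = of_int k"
    unfolding qz_rel_def by (auto elim: Ints_cases)
  then have "of_rat a = (of_rat b :: real) + of_int k"
    by (metis add_diff_cancel_left' diff_add_cancel of_rat_add of_rat_of_int_eq)
  then have "2 * pi * of_rat a = 2 * pi * of_rat b + 2 * pi * real_of_int k"
    by (simp add: algebra_simps)
  then show "cis (2 * pi * of_rat a) = cis (2 * pi * of_rat b)"
    by (simp add: cis_mult[symmetric] cis_multiple_2pi Ints_of_int)
qed

definition linking_form :: "('g::{finite,ab_group_add} \<Rightarrow> 'g \<Rightarrow> qz) \<Rightarrow> bool" where
  "linking_form b \<longleftrightarrow>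
     (\<forall>x y. b x y = b y x) \<and>
     (\<forall>x y z. b (x + y) z = b x z + b y z) \<and>
     (\<forall>x y z. b x (y + z) = b x y + b x z) \<and>
     (\<forall>y. (\<forall>x. b x y = 0) \<longrightarrow> y = 0)"

definition bq :: "('g::{finite,ab_group_add} \<Rightarrow> qz) \<Rightarrow> 'g \<Rightarrow> 'g \<Rightarrow> qz" where
  "bq q x y = q (x + y) - q x - q y"

definition quadratic_linking_function :: "('g::{finite,ab_group_add} \<Rightarrow> qz) \<Rightarrow> bool" where
  "quadratic_linking_function q \<longleftrightarrow> linking_form (bq q)"

definition quadratic_linking_form :: "('g::{finite,ab_group_add} \<Rightarrow> qz) \<Rightarrow> bool" where
  "quadratic_linking_form q \<longleftrightarrow> quadratic_linking_function q \<and> (\<forall>x. q (- x) = q x)"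

definition qshift :: "('g::{finite,ab_group_add} \<Rightarrow> qz) \<Rightarrow> 'g \<Rightarrow> 'g \<Rightarrow> qz" where
  "qshift q a x = q x + bq q x a"

definition beta :: "('g::{finite,ab_group_add} \<Rightarrow> qz) \<Rightarrow> 'g" where
  "beta q = (THE c. \<exists>qo a. quadratic_linking_form qo \<and> bq qo = bq q \<and> q = qshift qo a \<and> c = a + a)"

definition group_automorphism :: "('g::ab_group_add \<Rightarrow> 'g) \<Rightarrow> bool" where
  "group_automorphism \<theta> \<longleftrightarrow> bij \<theta> \<and> (\<forall>x y. \<theta> (x + y) = \<theta> x + \<theta> y)"

definition pair_iso ::
  "('g::{finite,ab_group_add} \<Rightarrow> 'g \<Rightarrow> qz) \<Rightarrow> 'g \<Rightarrow> ('g \<Rightarrow> 'g \<Rightarrow> qz) \<Rightarrow> 'g \<Rightarrow> bool" where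
  "pair_iso b0 \<beta>0 b1 \<beta>1 \<longleftrightarrow>
     (\<exists>\<theta>. group_automorphism \<theta> \<and> (\<forall>x y. b1 (\<theta> x) (\<theta> y) = b0 x y) \<and> \<theta> \<beta>0 = \<beta>1)"

definition isometric :: "('g::{finite,ab_group_add} \<Rightarrow> qz) \<Rightarrow> ('g \<Rightarrow> qz) \<Rightarrow> bool" where
  "isometric q0 q1 \<longleftrightarrow> (\<exists>\<theta>. group_automorphism \<theta> \<and> q1 \<circ> \<theta> = q0)"

definition gauss_sum :: "('g::{finite,ab_group_add} \<Rightarrow> qz) \<Rightarrow> complex" where
  "gauss_sum q = (\<Sum>x\<in>UNIV. qz_exp (q x))"

text \<open>Kervaire--Arf invariant arg(GS q)/2pi; a real representative, to be read modulo Z\<close>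
definition kervaire_arf :: "('g::{finite,ab_group_add} \<Rightarrow> qz) \<Rightarrow> real" where
  "kervaire_arf q = Arg (gauss_sum q) / (2 * pi)"

end

theory Submission
  imports Defs
begin

text \<open>
  An isometry transports \<open>b\<close> and \<open>beta\<close> and permutes the terms of the Gauss sum.
  Conversely, after transporting \<open>q\<^sub>1\<close> along the isomorphism of the pairs \<open>(b, beta)\<close> we may
  assume \<open>b(q\<^sub>0) = b(q\<^sub>1)\<close> and \<open>beta(q\<^sub>0) = beta(q\<^sub>1)\<close>. Then \<open>q\<^sub>1 - q\<^sub>0\<close> is a homomorphism
  \<open>G \<rightarrow> Q/Z\<close>, hence equal to \<open>b(-, c)\<close> by nondegeneracy, and equality of \<open>beta\<close> makes it
  even, hence of order two, so \<open>2c = 0\<close> and \<open>q\<^sub>1 = (q\<^sub>0)\<^sub>c\<close>. Translating the summation variable by \<open>c\<close> gives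
  \<open>GS(q\<^sub>1) = exp(-2\<pi>i q\<^sub>0(c)) GS(q\<^sub>0)\<close>; as \<open>GS(q\<^sub>0) \<noteq> 0\<close> and the Kervaire--Arf invariants agree,
  \<open>q\<^sub>0(c) = 0\<close>. Then \<open>x \<mapsto> x + \<epsilon>(x) c\<close>, with \<open>\<epsilon>(x) \<in> {0, 1}\<close> recording whether
  \<open>b(x, c) \<noteq> 0\<close>, is an automorphism of \<open>G\<close> carrying \<open>q\<^sub>1\<close> to \<open>q\<^sub>0\<close>.
\<close>

lemma qz_exp_add: "qz_exp (a + b) = qz_exp a * qz_exp b"
  by transfer (simp add: cis_mult of_rat_add algebra_simps)

lemma qz_exp_zero [simp]: "qz_exp 0 = 1"
  by transfer simp

lemma qz_exp_diff: "qz_exp (a - b) = qz_exp a * qz_exp (- b)"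
  by (metis diff_conv_add_uminus qz_exp_add)

lemma norm_qz_exp [simp]: "norm (qz_exp a) = 1"
  by transfer simp

lemma qz_exp_eq_1_iff: "qz_exp a = 1 \<longleftrightarrow> a = 0"
proof
  show "qz_exp a = 1 \<Longrightarrow> a = 0"
  proof transfer
    fix r :: rat
    assume "cis (2 * pi * of_rat r) = 1"
    then have "cos (2 * pi * of_rat r) = 1"
      by (metis cis.sel(1) one_complex.sel(1))
    then obtain n :: int where "2 * pi * of_rat r = real_of_int n * 2 * pi"
      using cos_one_2pi_int by blast
    then have "of_rat r = (of_rat (of_int n) :: real)" by simp
    then show "qz_rel r 0" unfolding of_rat_eq_iff by (simp add: qz_rel_def)
  qed
qed simp

lemma half_integer_minus_half_in_Ints: "(r::rat) + r \<in> \<int> \<Longrightarrow> r \<notin> \<int> \<Longrightarrow> r - 1/2 \<in> \<int>"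
proof -
  assume "r + r \<in> \<int>" and "r \<notin> \<int>"
  then obtain m :: int where m: "r + r = of_int m" by (auto elim: Ints_cases)
  have "odd m"
  proof
    assume "even m"
    then obtain k where "m = 2 * k" by blast
    with m have "r = of_int k" by simp
    with \<open>r \<notin> \<int>\<close> show False by simp
  qed
  then obtain k where "m = 2 * k + 1" by (rule oddE)
  with m have "r - 1/2 = of_int k" by (simp add: field_simps)
  then show "r - 1/2 \<in> \<int>" by simp
qed

lemma qz_order_two_unique:
  fixes u v :: qz
  assumes "u + u = 0" "v + v = 0" "u \<noteq> 0" "v \<noteq> 0"
  shows "u = v"
  using assms
proof transfer
  fix r s :: rat
  assume "qz_rel (r + r) 0" "qz_rel (s + s) 0" "\<not> qz_rel r 0" "\<not> qz_rel s 0"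
  then have "r - 1/2 \<in> \<int>" "s - 1/2 \<in> \<int>"
    by (simp_all add: qz_rel_def half_integer_minus_half_in_Ints)
  then have "(r - 1/2) - (s - 1/2) \<in> \<int>" by (rule Ints_diff)
  then show "qz_rel r s" by (simp add: qz_rel_def)
qed

lemma linking_form_commute: "linking_form b \<Longrightarrow> b x y = b y x"
  by (simp add: linking_form_def)

lemma linking_form_additive_left: "linking_form b \<Longrightarrow> additive (\<lambda>x. b x z)"
  by (simp add: linking_form_def additive_def)

lemma linking_form_additive_right: "linking_form b \<Longrightarrow> additive (b x)"
  by (simp add: linking_form_def additive_def)

lemma linking_form_nondegenerate: "linking_form b \<Longrightarrow> (\<And>x. b x y = 0) \<Longrightarrow> y = 0"
  by (simp add: linking_form_def)

lemmas linking_form_add_left = additive.add[OF linking_form_additive_left]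
lemmas linking_form_add_right = additive.add[OF linking_form_additive_right]
lemmas linking_form_zero_left = additive.zero[OF linking_form_additive_left]
lemmas linking_form_zero_right = additive.zero[OF linking_form_additive_right]
lemmas linking_form_minus_left = additive.minus[OF linking_form_additive_left]
lemmas linking_form_minus_right = additive.minus[OF linking_form_additive_right]
lemmas linking_form_diff_right = additive.diff[OF linking_form_additive_right]

lemma linking_form_right_cancel:
  assumes "linking_form b" and "\<And>x. b x c = b x c'"
  shows "c = c'"
proof -
  have "c - c' = 0"
    using assms by (intro linking_form_nondegenerate[of b]) (simp_all add: linking_form_diff_right)
  then show ?thesis by simp
qed

lemma sum_UNIV_translate:
  "(\<Sum>x\<in>UNIV. f (x + c)) = (\<Sum>x\<in>(UNIV::'g::{finite,ab_group_add} set). f x)"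
  by (rule sum.reindex_bij_witness[of _ "\<lambda>x. x - c" "\<lambda>x. x + c"]) auto

lemma character_sum_eq_0:
  fixes \<chi> :: "'g::{finite,ab_group_add} \<Rightarrow> qz"
  assumes "additive \<chi>" and "\<chi> y \<noteq> 0"
  shows "(\<Sum>x\<in>UNIV. qz_exp (\<chi> x)) = 0"
proof -
  let ?S = "\<Sum>x\<in>UNIV. qz_exp (\<chi> x)"
  have "?S = (\<Sum>x\<in>UNIV. qz_exp (\<chi> (x + y)))" by (rule sum_UNIV_translate[symmetric])
  also have "\<dots> = qz_exp (\<chi> y) * ?S"
    by (simp add: additive.add[OF assms(1)] qz_exp_add sum_distrib_left mult.commute)
  finally have "(qz_exp (\<chi> y) - 1) * ?S = 0" by (simp add: algebra_simps)
  moreover have "qz_exp (\<chi> y) \<noteq> 1" using assms(2) by (simp add: qz_exp_eq_1_iff)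
  ultimately show ?thesis by simp
qed

lemma linking_form_orthogonality:
  fixes b :: "'g::{finite,ab_group_add} \<Rightarrow> 'g \<Rightarrow> qz"
  assumes "linking_form b"
  shows "(\<Sum>y\<in>UNIV. qz_exp (b y z)) = (if z = 0 then of_nat (card (UNIV::'g set)) else 0)"
proof (cases "z = 0")
  case True
  then show ?thesis by (simp add: linking_form_zero_right[OF assms])
next
  case False
  then obtain y where "b y z \<noteq> 0" using linking_form_nondegenerate[OF assms] by blast
  with False show ?thesis
    by (simp add: character_sum_eq_0[OF linking_form_additive_left[OF assms]])
qed

lemma linking_form_represents_additive:
  fixes b :: "'g::{finite,ab_group_add} \<Rightarrow> 'g \<Rightarrow> qz"
  assumes lf: "linking_form b" and h: "additive h"
  shows "\<exists>c. \<forall>x. h x = b x c"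
proof (rule ccontr)
  assume none: "\<nexists>c. \<forall>x. h x = b x c"
  have "(\<Sum>x\<in>UNIV. qz_exp (h x - b x c)) = 0" for c
  proof -
    have "additive (\<lambda>x. h x - b x c)"
      by unfold_locales (simp add: additive.add[OF h] linking_form_add_left[OF lf])
    moreover obtain y where "h y - b y c \<noteq> 0" using none by auto
    ultimately show ?thesis by (rule character_sum_eq_0)
  qed
  then have "0 = (\<Sum>c\<in>UNIV. \<Sum>x\<in>UNIV. qz_exp (h x - b x c))" by simp
  also have "\<dots> = (\<Sum>x\<in>UNIV. qz_exp (h x) * (\<Sum>c\<in>UNIV. qz_exp (b c (- x))))"
    by (subst sum.swap) (simp add: sum_distrib_left linking_form_minus_right[OF lf]
        linking_form_commute[OF lf, of x for x] qz_exp_diff)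
  also have "\<dots> = (\<Sum>x::'g\<in>UNIV. if x = 0 then of_nat (card (UNIV::'g set)) else 0)"
    by (rule sum.cong[OF refl]) (simp add: linking_form_orthogonality[OF lf] additive.zero[OF h])
  also have "\<dots> = of_nat (card (UNIV::'g set))"
    by simp
  finally show False by simp
qed

lemma linking_form_halving:
  fixes b :: "'g::{finite,ab_group_add} \<Rightarrow> 'g \<Rightarrow> qz"
  assumes lf: "linking_form b" and ann: "\<And>y. y + y = 0 \<Longrightarrow> b y c = 0"
  shows "\<exists>a. a + a = c"
proof (rule ccontr)
  assume "\<nexists>a. a + a = c"
  then have "(\<Sum>y\<in>UNIV. qz_exp (b y (a + a - c))) = 0" for a
    by (simp add: linking_form_orthogonality[OF lf])
  then have "0 = (\<Sum>a\<in>UNIV. \<Sum>y\<in>UNIV. qz_exp (b y (a + a - c)))" by simp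
  also have "\<dots> = (\<Sum>y\<in>UNIV. (\<Sum>a\<in>UNIV. qz_exp (b a (y + y))) * qz_exp (- b y c))"
    by (subst sum.swap) (simp add: linking_form_diff_right[OF lf] linking_form_add_right[OF lf]
        linking_form_commute[OF lf, of y for y] qz_exp_diff sum_distrib_right)
  also have "\<dots> = (\<Sum>y::'g\<in>UNIV. if y + y = 0 then of_nat (card (UNIV::'g set)) else 0)"
    by (rule sum.cong[OF refl]) (simp add: linking_form_orthogonality[OF lf] ann)
  also have "\<dots> = of_nat (card {y::'g. y + y = 0}) * of_nat (card (UNIV::'g set))"
    by (simp add: sum.If_cases)
  finally have "card {y::'g. y + y = 0} = 0" by simp
  moreover have "(0::'g) \<in> {y. y + y = 0}" by simp
  ultimately show False by (metis card_0_eq empty_iff finite)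
qed

lemma quadratic_add_eq: "q (x + y) = q x + q y + bq q x y"
  by (simp add: bq_def)

lemma quadratic_linking_function_zero:
  assumes "quadratic_linking_function q"
  shows "q 0 = 0"
proof -
  have "bq q 0 0 = 0"
    using assms by (simp add: quadratic_linking_function_def linking_form_zero_left)
  then show ?thesis by (simp add: bq_def)
qed

lemma additive_odd_part:
  assumes "quadratic_linking_function q"
  shows "additive (\<lambda>x. q x - q (- x))"
proof
  have lf: "linking_form (bq q)" using assms by (simp add: quadratic_linking_function_def)
  fix x y
  have "q (- (x + y)) = q (- x) + q (- y) + bq q x y"
    using quadratic_add_eq[of q "- x" "- y"]
    by (simp add: linking_form_minus_left[OF lf] linking_form_minus_right[OF lf] add.commute)
  then show "q (x + y) - q (- (x + y)) = (q x - q (- x)) + (q y - q (- y))"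
    by (simp add: quadratic_add_eq[of q x y] algebra_simps)
qed

lemma bq_qshift:
  assumes "linking_form (bq q)"
  shows "bq (qshift q a) = bq q"
proof (intro ext)
  fix x y
  have "bq q (x + y) a = bq q x a + bq q y a" by (rule linking_form_add_left[OF assms])
  then show "bq (qshift q a) x y = bq q x y"
    by (simp add: bq_def[of "qshift q a"] qshift_def) (simp add: bq_def)
qed

lemma qshift_qshift: "linking_form (bq q) \<Longrightarrow> qshift (qshift q a) a' = qshift q (a + a')"
  by (intro ext) (simp add: qshift_def[of "qshift q a"] bq_qshift, simp add: qshift_def
      linking_form_add_right add.assoc)

lemma qshift_zero: "linking_form (bq q) \<Longrightarrow> qshift q 0 = q"
  by (intro ext) (simp add: qshift_def linking_form_zero_right)

lemma odd_part_qshift: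
  assumes "quadratic_linking_form q"
  shows "qshift q a x - qshift q a (- x) = bq q x (a + a)"
proof -
  have "linking_form (bq q)" and "q (- x) = q x"
    using assms by (simp_all add: quadratic_linking_form_def quadratic_linking_function_def)
  then show ?thesis
    by (simp add: qshift_def linking_form_minus_left linking_form_add_right)
qed

text \<open>The hypothesis makes \<open>c\<close> annihilate the elements of order two, so \<open>c = a + a\<close> by halving
  and \<open>q = qshift qo a\<close> with \<open>qo = qshift q (- a)\<close> even. Conversely, every decomposition
  \<open>q = qshift qo' a'\<close> with \<open>qo'\<close> even recovers \<open>a' + a'\<close> from the odd part of \<open>q\<close>, so the
  \<open>THE\<close> in the definition of \<open>beta\<close> is well defined.\<close>

lemma beta_eqI:
  assumes Q: "quadratic_linking_function q" and c: "\<And>x. q x - q (- x) = bq q x c"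
  shows "beta q = c"
proof -
  have lf: "linking_form (bq q)" using Q by (simp add: quadratic_linking_function_def)
  have "bq q y c = 0" if "y + y = 0" for y
    using c[of y] minus_unique[OF that] by simp
  then obtain a where a: "a + a = c" using linking_form_halving[OF lf] by blast
  define qo where "qo = qshift q (- a)"
  have bqo: "bq qo = bq q" by (simp add: qo_def bq_qshift lf)
  have "qo (- x) = qo x" for x
    using c[of x]
    by (simp add: qo_def qshift_def linking_form_minus_left[OF lf] linking_form_minus_right[OF lf]
        a[symmetric] linking_form_add_right[OF lf] algebra_simps)
  then have "quadratic_linking_form qo"
    using lf bqo by (simp add: quadratic_linking_form_def quadratic_linking_function_def)
  moreover have "q = qshift qo a" by (simp add: qo_def qshift_qshift qshift_zero lf)
  ultimately show ?thesis
    unfolding beta_def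
  proof (intro the_equality)
    fix c'
    assume "\<exists>qo a. quadratic_linking_form qo \<and> bq qo = bq q \<and> q = qshift qo a \<and> c' = a + a"
    then obtain qo' a' where "quadratic_linking_form qo'" "bq qo' = bq q" "q = qshift qo' a'"
      and "c' = a' + a'"
      by blast
    then have "q x - q (- x) = bq q x c'" for x by (simp add: odd_part_qshift)
    then show "c' = c" by (intro linking_form_right_cancel[OF lf]) (simp add: c[symmetric])
  qed (use bqo a in blast)
qed

lemma diff_minus_eq_bq_beta:
  assumes "quadratic_linking_function q"
  shows "q x - q (- x) = bq q x (beta q)"
proof -
  have "linking_form (bq q)" using assms by (simp add: quadratic_linking_function_def)
  then obtain c where c: "\<And>x. q x - q (- x) = bq q x c"
    using linking_form_represents_additive additive_odd_part[OF assms] by blast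
  then have "beta q = c" by (rule beta_eqI[OF assms])
  then show ?thesis by (simp add: c)
qed

lemma group_automorphism_additive: "group_automorphism \<theta> \<Longrightarrow> additive \<theta>"
  by (simp add: group_automorphism_def additive_def)

lemma group_automorphism_comp:
  "group_automorphism \<theta> \<Longrightarrow> group_automorphism \<sigma> \<Longrightarrow> group_automorphism (\<sigma> \<circ> \<theta>)"
  by (simp add: group_automorphism_def bij_comp)

lemma isometric_trans:
  assumes "isometric q0 q1" and "isometric q1 q2"
  shows "isometric q0 q2"
proof -
  obtain \<theta> \<sigma> where "group_automorphism \<theta>" "q1 \<circ> \<theta> = q0" "group_automorphism \<sigma>" "q2 \<circ> \<sigma> = q1"
    using assms unfolding isometric_def by blast
  then have "group_automorphism (\<sigma> \<circ> \<theta>) \<and> q2 \<circ> (\<sigma> \<circ> \<theta>) = q0"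
    by (simp add: group_automorphism_comp comp_assoc[symmetric])
  then show ?thesis unfolding isometric_def by blast
qed

lemma bq_comp: "additive \<theta> \<Longrightarrow> bq (q \<circ> \<theta>) x y = bq q (\<theta> x) (\<theta> y)"
  by (simp add: bq_def additive.add)

lemma quadratic_linking_function_comp:
  assumes Q: "quadratic_linking_function q" and \<theta>: "group_automorphism \<theta>"
  shows "quadratic_linking_function (q \<circ> \<theta>)"
proof -
  have lf: "linking_form (bq q)" using Q by (simp add: quadratic_linking_function_def)
  have add: "additive \<theta>" and bij: "bij \<theta>"
    using \<theta> by (simp_all add: group_automorphism_additive group_automorphism_def)
  have "y = 0" if "\<And>x. bq q (\<theta> x) (\<theta> y) = 0" for y
  proof -
    have "\<theta> y = 0"
      using that[of "inv \<theta> x" for x] bij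
      by (intro linking_form_nondegenerate[OF lf]) (simp add: bij_is_surj surj_f_inv_f)
    then have "\<theta> y = \<theta> 0" by (simp add: additive.zero[OF add])
    then show ?thesis using bij by (simp add: bij_is_inj inj_eq)
  qed
  then show ?thesis
    unfolding quadratic_linking_function_def linking_form_def bq_comp[OF add]
    by (simp add: additive.add[OF add] linking_form_commute[OF lf] linking_form_add_left[OF lf]
        linking_form_add_right[OF lf])
qed

lemma beta_comp:
  assumes Q: "quadratic_linking_function q" and \<theta>: "group_automorphism \<theta>"
  shows "\<theta> (beta (q \<circ> \<theta>)) = beta q"
proof (rule sym, rule beta_eqI[OF Q])
  have add: "additive \<theta>" and "surj \<theta>"
    using \<theta> by (simp_all add: group_automorphism_additive group_automorphism_def bij_is_surj)
  fix x
  obtain x' where x: "x = \<theta> x'" using surjD[OF \<open>surj \<theta>\<close>] by blast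
  have "(q \<circ> \<theta>) x' - (q \<circ> \<theta>) (- x') = bq (q \<circ> \<theta>) x' (beta (q \<circ> \<theta>))"
    by (rule diff_minus_eq_bq_beta[OF quadratic_linking_function_comp[OF Q \<theta>]])
  then show "q x - q (- x) = bq q x (\<theta> (beta (q \<circ> \<theta>)))"
    by (simp add: x bq_comp[OF add] additive.minus[OF add])
qed

lemma gauss_sum_comp: "bij \<theta> \<Longrightarrow> gauss_sum (q \<circ> \<theta>) = gauss_sum q"
  unfolding gauss_sum_def comp_def by (rule sum.reindex_bij_betw)

lemma gauss_sum_qshift: "gauss_sum (qshift q c) = qz_exp (- q c) * gauss_sum q"
proof -
  have "qshift q c x = q (x + c) - q c" for x
    by (simp add: qshift_def bq_def)
  then have "gauss_sum (qshift q c) = (\<Sum>x\<in>UNIV. qz_exp (- q c) * qz_exp (q (x + c)))"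
    by (simp add: gauss_sum_def qz_exp_diff mult.commute)
  also have "\<dots> = qz_exp (- q c) * gauss_sum q"
    by (simp add: gauss_sum_def sum_distrib_left[symmetric] sum_UNIV_translate[of "\<lambda>x. qz_exp (q x)"])
  finally show ?thesis .
qed

lemma gauss_sum_mult_gauss_sum_uminus:
  fixes q :: "'g::{finite,ab_group_add} \<Rightarrow> qz"
  assumes Q: "quadratic_linking_function q"
  shows "gauss_sum q * gauss_sum (\<lambda>x. - q x) = of_nat (card (UNIV::'g set))"
proof -
  have lf: "linking_form (bq q)" using Q by (simp add: quadratic_linking_function_def)
  have "gauss_sum q * gauss_sum (\<lambda>x. - q x) = (\<Sum>x\<in>UNIV. \<Sum>y\<in>UNIV. qz_exp (q x - q y))"
    by (simp add: gauss_sum_def sum_product qz_exp_diff)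
  also have "\<dots> = (\<Sum>y\<in>UNIV. \<Sum>x\<in>UNIV. qz_exp (q x - q y))"
    by (rule sum.swap)
  also have "\<dots> = (\<Sum>y\<in>UNIV. \<Sum>z\<in>UNIV. qz_exp (q z) * qz_exp (bq q y z))"
  proof (rule sum.cong[OF refl])
    fix y
    have "q (z + y) - q y = q z + bq q y z" for z
      by (simp add: quadratic_add_eq linking_form_commute[OF lf, of z])
    then show "(\<Sum>x\<in>UNIV. qz_exp (q x - q y)) = (\<Sum>z\<in>UNIV. qz_exp (q z) * qz_exp (bq q y z))"
      using sum_UNIV_translate[of "\<lambda>x. qz_exp (q x - q y)" y] by (simp add: qz_exp_add)
  qed
  also have "\<dots> = (\<Sum>z\<in>UNIV. qz_exp (q z) * (\<Sum>y\<in>UNIV. qz_exp (bq q y z)))"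
    by (subst sum.swap) (simp add: sum_distrib_left)
  also have "\<dots> = (\<Sum>z::'g\<in>UNIV. if z = 0 then of_nat (card (UNIV::'g set)) else 0)"
    by (rule sum.cong[OF refl])
      (simp add: linking_form_orthogonality[OF lf] quadratic_linking_function_zero[OF Q])
  also have "\<dots> = of_nat (card (UNIV::'g set))" by simp
  finally show ?thesis .
qed

lemma gauss_sum_nonzero:
  fixes q :: "'g::{finite,ab_group_add} \<Rightarrow> qz"
  assumes "quadratic_linking_function q"
  shows "gauss_sum q \<noteq> 0"
proof
  assume "gauss_sum q = 0"
  with gauss_sum_mult_gauss_sum_uminus[OF assms] have "card (UNIV::'g set) = 0" by simp
  then show False by simp
qed

lemma kervaire_arf_congruent_iff:
  "kervaire_arf q0 - kervaire_arf q1 \<in> \<int> \<longleftrightarrow> Arg (gauss_sum q0) = Arg (gauss_sum q1)"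
proof
  let ?A = "Arg (gauss_sum q0)" and ?B = "Arg (gauss_sum q1)"
  assume "kervaire_arf q0 - kervaire_arf q1 \<in> \<int>"
  moreover have "\<bar>?A / (2 * pi) - ?B / (2 * pi)\<bar> < 1"
    using Arg_bounded[of "gauss_sum q0"] Arg_bounded[of "gauss_sum q1"] pi_gt_zero
    by (simp add: diff_divide_distrib[symmetric] abs_less_iff field_simps)
  ultimately have "?A / (2 * pi) - ?B / (2 * pi) = 0"
    unfolding kervaire_arf_def by (rule Ints_nonzero_abs_less1)
  then show "?A = ?B" by simp
qed (simp add: kervaire_arf_def)

lemma eq_qshift_order_two_if_bq_beta_eq:
  assumes Q0: "quadratic_linking_function q0" and Q1: "quadratic_linking_function q1"
    and bq: "bq q1 = bq q0" and beta: "beta q1 = beta q0"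
  shows "\<exists>c. c + c = 0 \<and> q1 = qshift q0 c"
proof -
  have lf: "linking_form (bq q0)" using Q0 by (simp add: quadratic_linking_function_def)
  define h where "h x = q1 x - q0 x" for x
  have add: "additive h"
    by unfold_locales (simp add: h_def quadratic_add_eq[of q1] quadratic_add_eq[of q0] bq)
  have "h (- x) = h x" for x
    using diff_minus_eq_bq_beta[OF Q0, of x] diff_minus_eq_bq_beta[OF Q1, of x]
    by (simp add: h_def bq beta algebra_simps)
  then have h2: "h x + h x = 0" for x
    using additive.minus[OF add, of x] by (simp add: eq_neg_iff_add_eq_0)
  obtain c where c: "\<And>x. h x = bq q0 x c"
    using linking_form_represents_additive[OF lf add] by blast
  have "c + c = 0"
    by (rule linking_form_nondegenerate[OF lf]) (simp add: linking_form_add_right[OF lf] c[symmetric] h2)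
  moreover have "q1 = qshift q0 c"
    by (intro ext) (simp add: qshift_def c[symmetric] h_def)
  ultimately show ?thesis by blast
qed

text \<open>The isometry translates by \<open>c\<close> exactly those \<open>x\<close> on which the order-two character
  \<open>bq q x c\<close> is nontrivial.\<close>

lemma isometric_qshift_order_two:
  assumes Q: "quadratic_linking_function q" and c2: "c + c = 0" and qc: "q c = 0"
  shows "isometric q (qshift q c)"
proof -
  have lf: "linking_form (bq q)" using Q by (simp add: quadratic_linking_function_def)
  define \<psi> where "\<psi> x = (if bq q x c = 0 then x else x + c)" for x
  have bcc: "bq q c c = 0"
    using quadratic_add_eq[of q c c] by (simp add: c2 qc quadratic_linking_function_zero[OF Q])
  have b2: "bq q x c + bq q x c = 0" for x
    by (simp add: linking_form_add_right[OF lf, symmetric] c2 linking_form_zero_right[OF lf])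
  have "\<psi> (\<psi> x) = x" for x
    by (simp add: \<psi>_def linking_form_add_left[OF lf] bcc add.assoc c2)
  then have "bij \<psi>" by (rule involuntory_imp_bij)
  moreover have "additive \<psi>"
  proof
    fix x y
    consider "bq q x c = 0 \<or> bq q y c = 0" | "bq q x c \<noteq> 0" "bq q y c \<noteq> 0" by blast
    then show "\<psi> (x + y) = \<psi> x + \<psi> y"
    proof cases
      case 1
      then show ?thesis by (auto simp: \<psi>_def linking_form_add_left[OF lf] algebra_simps)
    next
      case 2
      then have "bq q x c = bq q y c" using qz_order_two_unique b2 by blast
      then have "bq q (x + y) c = 0" using b2[of x] by (simp add: linking_form_add_left[OF lf])
      with 2 show ?thesis by (simp add: \<psi>_def algebra_simps c2)
    qed
  qed
  moreover have "qshift q c (\<psi> x) = q x" for x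
    using b2[of x]
    by (simp add: \<psi>_def qshift_def quadratic_add_eq[of q x c] qc linking_form_add_left[OF lf] bcc)
  ultimately show ?thesis
    unfolding isometric_def group_automorphism_def additive_def by (auto intro!: exI[of _ \<psi>])
qed

lemma isometric_if_bq_beta_Arg_eq:
  assumes Q0: "quadratic_linking_function q0" and Q1: "quadratic_linking_function q1"
    and "bq q1 = bq q0" and "beta q1 = beta q0"
    and Arg: "Arg (gauss_sum q0) = Arg (gauss_sum q1)"
  shows "isometric q0 q1"
proof -
  obtain c where c2: "c + c = 0" and q1: "q1 = qshift q0 c"
    using eq_qshift_order_two_if_bq_beta_eq assms by blast
  then have G: "gauss_sum q1 = qz_exp (- q0 c) * gauss_sum q0"
    by (simp add: gauss_sum_qshift)
  then have "cmod (gauss_sum q1) = cmod (gauss_sum q0)" by (simp add: norm_mult)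
  with Arg have "gauss_sum q1 = gauss_sum q0"
    using rcis_cmod_Arg[of "gauss_sum q0"] rcis_cmod_Arg[of "gauss_sum q1"] by simp
  with G gauss_sum_nonzero[OF Q0] have "qz_exp (- q0 c) = 1" by simp
  then have "q0 c = 0" by (simp add: qz_exp_eq_1_iff)
  then show ?thesis using isometric_qshift_order_two[OF Q0 c2] q1 by simp
qed

lemma isometric_imp_pair_iso:
  assumes Q1: "quadratic_linking_function q1" and "isometric q0 q1"
  shows "pair_iso (bq q0) (beta q0) (bq q1) (beta q1)"
proof -
  obtain \<theta> where \<theta>: "group_automorphism \<theta>" and q0: "q0 = q1 \<circ> \<theta>"
    using assms(2) unfolding isometric_def by metis
  have "bq q1 (\<theta> x) (\<theta> y) = bq q0 x y" for x y
    by (simp add: q0 bq_comp[OF group_automorphism_additive[OF \<theta>]])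
  moreover have "\<theta> (beta q0) = beta q1"
    unfolding q0 by (rule beta_comp[OF Q1 \<theta>])
  ultimately show ?thesis unfolding pair_iso_def using \<theta> by blast
qed

lemma isometric_imp_gauss_sum_eq: "isometric q0 q1 \<Longrightarrow> gauss_sum q0 = gauss_sum q1"
  unfolding isometric_def group_automorphism_def by (auto simp: gauss_sum_comp)

lemma pair_iso_imp_comp_same_bq_beta:
  assumes Q1: "quadratic_linking_function q1"
    and "pair_iso (bq q0) (beta q0) (bq q1) (beta q1)"
  obtains \<theta> where "group_automorphism \<theta>" "bq (q1 \<circ> \<theta>) = bq q0" "beta (q1 \<circ> \<theta>) = beta q0"
proof -
  obtain \<theta> where \<theta>: "group_automorphism \<theta>" and bq: "\<And>x y. bq q1 (\<theta> x) (\<theta> y) = bq q0 x y"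
    and beta: "\<theta> (beta q0) = beta q1"
    using assms(2) unfolding pair_iso_def by blast
  have "bq (q1 \<circ> \<theta>) = bq q0"
    by (intro ext) (simp add: bq_comp[OF group_automorphism_additive[OF \<theta>]] bq)
  moreover have "inj \<theta>" using \<theta> by (simp add: group_automorphism_def bij_is_inj)
  then have "beta (q1 \<circ> \<theta>) = beta q0"
    by (rule injD) (simp add: beta_comp[OF Q1 \<theta>] beta)
  ultimately show thesis using \<theta> that by blast
qed

theorem theorem3p5:
  fixes q0 q1 :: "'g::{finite,ab_group_add} \<Rightarrow> qz"
  assumes "quadratic_linking_function q0"
      and "quadratic_linking_function q1"
  shows "isometric q0 q1 \<longleftrightarrow>
           pair_iso (bq q0) (beta q0) (bq q1) (beta q1) \<and>
           kervaire_arf q0 - kervaire_arf q1 \<in> \<int>"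
proof
  assume iso: "isometric q0 q1"
  then have "gauss_sum q0 = gauss_sum q1" by (rule isometric_imp_gauss_sum_eq)
  with iso show "pair_iso (bq q0) (beta q0) (bq q1) (beta q1) \<and> kervaire_arf q0 - kervaire_arf q1 \<in> \<int>"
    by (simp add: isometric_imp_pair_iso[OF assms(2)] kervaire_arf_congruent_iff)
next
  assume "pair_iso (bq q0) (beta q0) (bq q1) (beta q1) \<and> kervaire_arf q0 - kervaire_arf q1 \<in> \<int>"
  then obtain \<theta> where \<theta>: "group_automorphism \<theta>"
    and "bq (q1 \<circ> \<theta>) = bq q0" "beta (q1 \<circ> \<theta>) = beta q0"
    and K: "kervaire_arf q0 - kervaire_arf q1 \<in> \<int>"
    using pair_iso_imp_comp_same_bq_beta[OF assms(2)] by blast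
  moreover have "Arg (gauss_sum q0) = Arg (gauss_sum (q1 \<circ> \<theta>))"
    using K \<theta> by (simp add: kervaire_arf_congruent_iff gauss_sum_comp group_automorphism_def)
  ultimately have "isometric q0 (q1 \<circ> \<theta>)"
    using isometric_if_bq_beta_Arg_eq assms quadratic_linking_function_comp by blast
  moreover have "isometric (q1 \<circ> \<theta>) q1" using \<theta> by (auto simp: isometric_def)
  ultimately show "isometric q0 q1" by (rule isometric_trans)
qed

end
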